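(* Let $\mathcal{L}$ be a Prob-solvable loop with guard polynomial $G$, and let $E_i:=\mathbb{E}(-G_{i+1}+G_i\mid\mathcal{F}_i)$. Suppose: (i) $u$ is an upper bounding function for $E$ and there exist $\kappa>0$ and $i_1$ with $u(i)\le-\kappa$ for all $i\ge i_1$; (ii) $\mathbb{P}(\mathit{Guard}_i)>0$ for every $i\in\mathbb{N}$; (iii) for every branch $B$ of $-G$ there is an absolute bounding function $c_B$ for the expression $B+G$, and there are a constant $C$ and $i_2$ with $c_B(i)\le C$ for all branches $B$ and all $i\ge i_2$. Then $M:=-G$ satisfies the conditions of the relaxed Repulsing-AST-rule: there exist $i_0\in\mathbb{N}$, $\epsilon>0$, $c>0$ with $\mathbb{P}(M_{i_0}<0)>0$ and, for all $i\ge i_0$ almost surely, $\neg\mathit{Guard}_i\implies M_i\ge0$, $\mathit{Guard}_i\implies\mathbb{E}(M_{i+1}-M_i\mid\mathcal{F}_i)\le-\epsilon$, and $|M_{i+1}-M_i|<c$. Consequently $\mathcal{L}$ is not AST.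
   Context: A Prob-solvable loop $\mathcal{L}$ with real-valued variables $x_{(1)},\dots,x_{(m)}$ consists of an initialization $x_{(j)}:=r_{(j)}\in\mathbb{R}$, a guard $P>Q$ with $P,Q$ real polynomials, and a loop body that, for $j=1,\dots,m$ in order, sets $x_{(j)}$ to $a_{(jk)}x_{(j)}+P_{(jk)}$ with probability $p_{jk}$ ($k<l_j$) or to the last alternative with the remaining probability (independent choices), where $a_{(jk)}\ge0$, $P_{(jk)}\in\mathbb{R}[x_{(1)},\dots,x_{(j-1)}]$ evaluated at already-updated values, $p_{jk}\in[0,1]$, $\sum_k p_{jk}<1$. $G:=P-Q$. The loop space $(\Omega,\Sigma,(\mathcal{F}_i),\mathbb{P})$: $\Omega=(\mathbb{R}^m)^\omega$, $\mathcal{F}_i$ generated by cylinder sets of prefixes of length $i+1$; under $\mathbb{P}$ the first state is the initial state and each next state results from one execution of the body if the guard holds, otherwise it repeats the current state. $E_i(\vartheta):=E(\vartheta_i)$; $\mathit{Guard}_i$ is the event $G_i>0$; $T:=\inf\{i:G_i\le0\}$; $\mathcal{L}$ is AST if $\mathbb{P}(T<\infty)=1$. Branches: for a polynomial $H$, each choice vector $\kappa$ of alternatives gives a polynomial $B_\kappa$ with $H(s')=B_\kappa(s)$ when the body is executed from $s$ with these choices, with probability the product of the chosen alternatives' probabilities; the branches of $H$ are the polynomials $B$ whose total probability (summed over $\kappa$ with $B_\kappa=B$) is positive. An upper bounding function for an expression $E$ is a monotone $u:\mathbb{N}\to\mathbb{R}$, everywhere non-negative or everywhere non-positive, such that for some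 $\alpha>0$ and all sufficiently large $i$, $\mathbb{P}(E_i\le\alpha\,u(i)\mid T>i)=1$. An absolute bounding function for $E$ is an upper bounding function for $|E|$. *)

theory Defs
  imports "HOL-Probability.Probability" "HOL-Library.Stream"
begin

datatype mpoly = MConst real | MVar nat | MAdd mpoly mpoly | MMul mpoly mpoly

fun peval :: "mpoly \<Rightarrow> (nat \<Rightarrow> real) \<Rightarrow> real" where
  "peval (MConst c) s = c"
| "peval (MVar j) s = s j"
| "peval (MAdd p q) s = peval p s + peval q s"
| "peval (MMul p q) s = peval p s * peval q s"

fun pvars :: "mpoly \<Rightarrow> nat set" where
  "pvars (MConst c) = {}"
| "pvars (MVar j) = {j}"
| "pvars (MAdd p q) = pvars p \<union> pvars q"
| "pvars (MMul p q) = pvars p \<union> pvars q"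

text \<open>Variables are x_0,...,x_(m-1) (0-indexed).  Variable j has nalt j alternatives
  k = 0 .. nalt j - 1; alternative k sets x_j to coef j k * x_j + upd j k; alternatives
  k < nalt j - 1 have probability pr j k, the last one the remaining probability.
  The guard is gP > gQ.\<close>

record psloop =
  nvars :: nat
  init :: "nat \<Rightarrow> real"
  gP :: mpoly
  gQ :: mpoly
  nalt :: "nat \<Rightarrow> nat"
  coef :: "nat \<Rightarrow> nat \<Rightarrow> real"
  upd :: "nat \<Rightarrow> nat \<Rightarrow> mpoly"
  pr :: "nat \<Rightarrow> nat \<Rightarrow> real"

definition prob_solvable :: "psloop \<Rightarrow> bool" where
  "prob_solvable L \<longleftrightarrow>
     pvars (gP L) \<subseteq> {..<nvars L} \<and> pvars (gQ L) \<subseteq> {..<nvars L} \<and>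
     (\<forall>j<nvars L. 1 \<le> nalt L j \<and>
        (\<forall>k<nalt L j. 0 \<le> coef L j k \<and> pvars (upd L j k) \<subseteq> {..<j}) \<and>
        (\<forall>k<nalt L j - 1. 0 \<le> pr L j k \<and> pr L j k \<le> 1) \<and>
        (\<Sum>k<nalt L j - 1. pr L j k) < 1)"

definition guardG :: "psloop \<Rightarrow> (nat \<Rightarrow> real) \<Rightarrow> real" where
  "guardG L s = peval (gP L) s - peval (gQ L) s"

definition alt_prob :: "psloop \<Rightarrow> nat \<Rightarrow> nat \<Rightarrow> real" where
  "alt_prob L j k =
     (if k < nalt L j - 1 then pr L j k
      else if k = nalt L j - 1 then 1 - (\<Sum>k'<nalt L j - 1. pr L j k')
      else 0)"

definition alt_pmf :: "psloop \<Rightarrow> nat \<Rightarrow> nat pmf" where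
  "alt_pmf L j = embed_pmf (alt_prob L j)"

definition choice_pmf :: "psloop \<Rightarrow> (nat \<Rightarrow> nat) pmf" where
  "choice_pmf L = Pi_pmf {..<nvars L} 0 (alt_pmf L)"

fun body_upto :: "psloop \<Rightarrow> nat \<Rightarrow> (nat \<Rightarrow> real) \<Rightarrow> (nat \<Rightarrow> nat) \<Rightarrow> (nat \<Rightarrow> real)" where
  "body_upto L 0 s \<kappa> = s"
| "body_upto L (Suc j) s \<kappa> =
     (let s' = body_upto L j s \<kappa>
      in s'(j := coef L j (\<kappa> j) * s' j + peval (upd L j (\<kappa> j)) s'))"

definition body :: "psloop \<Rightarrow> (nat \<Rightarrow> real) \<Rightarrow> (nat \<Rightarrow> nat) \<Rightarrow> (nat \<Rightarrow> real)" where
  "body L s \<kappa> = body_upto L (nvars L) s \<kappa>"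

definition loop_step :: "psloop \<Rightarrow> (nat \<Rightarrow> real) \<Rightarrow> (nat \<Rightarrow> nat) \<Rightarrow> (nat \<Rightarrow> real)" where
  "loop_step L s \<kappa> = (if guardG L s > 0 then body L s \<kappa> else s)"

primrec run_state :: "psloop \<Rightarrow> (nat \<Rightarrow> nat) stream \<Rightarrow> nat \<Rightarrow> (nat \<Rightarrow> real)" where
  "run_state L ks 0 = (\<lambda>j. if j < nvars L then init L j else 0)"
| "run_state L ks (Suc i) = loop_step L (run_state L ks i) (ks !! i)"

definition run :: "psloop \<Rightarrow> (nat \<Rightarrow> nat) stream \<Rightarrow> (nat \<Rightarrow> real) stream" where
  "run L ks = smap (run_state L ks) (siterate Suc 0)"

definition loop_space :: "psloop \<Rightarrow> (nat \<Rightarrow> real) stream measure" where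
  "loop_space L = distr (stream_space (measure_pmf (choice_pmf L))) (stream_space borel) (run L)"

definition loop_filt :: "psloop \<Rightarrow> nat \<Rightarrow> (nat \<Rightarrow> real) stream measure" where
  "loop_filt L i = sigma (space (loop_space L))
     {(\<lambda>\<omega>. \<omega> !! k) -` A \<inter> space (loop_space L) | k A. k \<le> i \<and> A \<in> sets borel}"

definition stop_time :: "psloop \<Rightarrow> (nat \<Rightarrow> real) stream \<Rightarrow> enat" where
  "stop_time L \<omega> =
     (if \<exists>i. guardG L (\<omega> !! i) \<le> 0 then enat (LEAST i. guardG L (\<omega> !! i) \<le> 0) else \<infinity>)"

definition is_AST :: "psloop \<Rightarrow> bool" where
  "is_AST L \<longleftrightarrow>
     measure (loop_space L) {\<omega> \<in> space (loop_space L). stop_time L \<omega> < \<infinity>} = 1"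

definition cond_prob :: "'a measure \<Rightarrow> 'a set \<Rightarrow> 'a set \<Rightarrow> real" where
  "cond_prob M A B = measure M (A \<inter> B) / measure M B"

definition upper_bf ::
  "psloop \<Rightarrow> (nat \<Rightarrow> (nat \<Rightarrow> real) stream \<Rightarrow> real) \<Rightarrow> (nat \<Rightarrow> real) \<Rightarrow> bool" where
  "upper_bf L X u \<longleftrightarrow>
     (mono u \<or> antimono u) \<and> ((\<forall>i. 0 \<le> u i) \<or> (\<forall>i. u i \<le> 0)) \<and>
     (\<exists>\<alpha>>0. \<exists>n0. \<forall>i\<ge>n0.
        cond_prob (loop_space L)
          {\<omega> \<in> space (loop_space L). X i \<omega> \<le> \<alpha> * u i}
          {\<omega> \<in> space (loop_space L). enat i < stop_time L \<omega>} = 1)"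

definition abs_bf ::
  "psloop \<Rightarrow> (nat \<Rightarrow> (nat \<Rightarrow> real) stream \<Rightarrow> real) \<Rightarrow> (nat \<Rightarrow> real) \<Rightarrow> bool" where
  "abs_bf L X u \<longleftrightarrow> upper_bf L (\<lambda>i \<omega>. \<bar>X i \<omega>\<bar>) u"

text \<open>Branches of a polynomial H (represented by its polynomial function on states):
  the functions s \<mapsto> H(body s kappa), grouped by equality, of positive total probability.\<close>
definition branches :: "psloop \<Rightarrow> ((nat \<Rightarrow> real) \<Rightarrow> real) \<Rightarrow> ((nat \<Rightarrow> real) \<Rightarrow> real) set" where
  "branches L H =
     {B. measure_pmf.prob (choice_pmf L) {\<kappa>. (\<lambda>s. H (body L s \<kappa>)) = B} > 0}"

end

theory Submission
  imports Defs
begin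

text \<open>While the guard holds, the drift of G is at least some \<epsilon> > 0 and its increments are bounded
  by some c: the drift comes from the upper bounding function of the expected decrease, and
  the bound on the increments from the finitely many branches of -G, whose bounding functions
  are uniformly bounded. For a small rate \<lambda> the potential exp(-\<lambda> G), set to 1 once the guard
  fails, is then a supermartingale from some step i0 on, by the estimate
  exp x \<le> 1 + x + x^2 for |x| \<le> 1. It is bounded by 1, equals 1 after termination, and at i0
  is strictly below 1 with positive probability. Hence the probability to have terminated by
  step n is at most its expectation at i0, which is < 1.\<close>

declare snth.simps(2)[simp del] \<comment> \<open>keep the next state as \<open>\<omega> !! Suc i\<close>\<close>

lemma exp_le_one_plus_x_plus_sq:
  fixes x :: real
  assumes "\<bar>x\<bar> \<le> 1"
  shows "exp x \<le> 1 + x + x\<^sup>2"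
proof (cases "x \<ge> 0")
  case True
  then show ?thesis using exp_bound[of x] assms by auto
next
  case False
  have "exp x = inverse (exp (- x))"
    by (simp add: exp_minus)
  also have "\<dots> \<le> inverse (1 - x)"
    using exp_ge_add_one_self[of "- x"] False by (intro le_imp_inverse_le) auto
  also have "\<dots> \<le> 1 + x + x\<^sup>2"
  proof -
    have "(1 - x) * (1 + x + x\<^sup>2) = 1 - x ^ 3"
      by (simp add: algebra_simps power2_eq_square power3_eq_cube)
    moreover have "x ^ 3 \<le> 0"
      using False by (simp add: power3_eq_cube mult_nonneg_nonpos)
    ultimately have "1 \<le> (1 - x) * (1 + x + x\<^sup>2)" by simp
    then show ?thesis using False by (simp add: field_simps)
  qed
  finally show ?thesis .
qed

lemma exp_neg_mult_le_quadratic: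
  fixes r a b c :: real
  assumes "0 \<le> r" "r * c \<le> 1" "\<bar>a - b\<bar> \<le> c"
  shows "exp (- r * b) \<le> exp (- r * a) * (1 + r * (a - b) + r\<^sup>2 * c\<^sup>2)"
proof -
  have small: "\<bar>r * (a - b)\<bar> \<le> r * c"
    using assms(1,3) by (simp add: abs_mult mult_left_mono)
  then have "exp (r * (a - b)) \<le> 1 + r * (a - b) + (r * (a - b))\<^sup>2"
    using assms(2) by (intro exp_le_one_plus_x_plus_sq) simp
  also have "(r * (a - b))\<^sup>2 \<le> (r * c)\<^sup>2"
    using power_mono[OF small abs_ge_zero, of 2] by simp
  also have "\<dots> = r\<^sup>2 * c\<^sup>2"
    by (rule power_mult_distrib)
  finally have "exp (r * (a - b)) \<le> 1 + r * (a - b) + r\<^sup>2 * c\<^sup>2" by simp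
  moreover have "exp (- r * b) = exp (- r * a) * exp (r * (a - b))"
    by (simp add: exp_add[symmetric] algebra_simps)
  ultimately show ?thesis by simp
qed

text \<open>The hypotheses of the relaxed Repulsing-AST rule for a process G that is absorbed
  once it becomes non-positive, with -G in the role of the repulsing function.\<close>

locale repulsing_process = prob_space +
  fixes F :: "nat \<Rightarrow> 'a measure" and G :: "nat \<Rightarrow> 'a \<Rightarrow> real"
    and n0 :: nat and \<epsilon> c :: real
  assumes subalgebra_F: "\<And>n. subalgebra M (F n)"
    and G_measurable: "\<And>n. G n \<in> borel_measurable (F n)"
    and absorbing: "\<And>n. AE x in M. G n x \<le> 0 \<longrightarrow> G (Suc n) x \<le> 0"
    and eps_pos: "0 < \<epsilon>" and c_pos: "0 < c"
    and drift: "\<And>n. n0 \<le> n \<Longrightarrow> AE x in M. 0 < G n x \<longrightarrow>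
                  real_cond_exp M (F n) (\<lambda>x. - G (Suc n) x + G n x) x \<le> - \<epsilon>"
    and bounded: "\<And>n. n0 \<le> n \<Longrightarrow> AE x in M. \<bar>- G (Suc n) x + G n x\<bar> < c"
begin

abbreviation decrease :: "nat \<Rightarrow> 'a \<Rightarrow> real" where
  "decrease n x \<equiv> - G (Suc n) x + G n x"

lemma G_borel_measurable[measurable]: "G n \<in> borel_measurable M"
  by (rule measurable_from_subalg[OF subalgebra_F G_measurable])

text \<open>The bound 1/c keeps the exponent of each step within [-1, 1]; the bound \<epsilon>/c^2 lets
  the drift absorb the quadratic error term.\<close>

definition rate :: real where
  "rate = min (1 / c) (\<epsilon> / c\<^sup>2)"

lemma rate_pos: "0 < rate"
  using eps_pos c_pos by (simp add: rate_def)

lemma rate_mult_c_le_1: "rate * c \<le> 1"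
  using mult_right_mono[of rate "1 / c" c] c_pos by (simp add: rate_def)

lemma rate_mult_c_sq_le_eps: "rate * c\<^sup>2 \<le> \<epsilon>"
  using mult_right_mono[of rate "\<epsilon> / c\<^sup>2" "c\<^sup>2"] c_pos by (simp add: rate_def)

definition potential :: "nat \<Rightarrow> 'a \<Rightarrow> real" where
  "potential n x = (if 0 < G n x then exp (- rate * G n x) else 1)"

definition guarded_potential :: "nat \<Rightarrow> 'a \<Rightarrow> real" where
  "guarded_potential n x = (if 0 < G n x then exp (- rate * G n x) else 0)"

lemma exp_neg_rate_le_1: "0 < G n x \<Longrightarrow> exp (- rate * G n x) \<le> 1"
  using rate_pos by simp

lemma potential_bounds: "0 \<le> potential n x" "potential n x \<le> 1"
  using exp_neg_rate_le_1[of n x] by (auto simp: potential_def)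

lemma guarded_potential_bounds: "0 \<le> guarded_potential n x" "guarded_potential n x \<le> 1"
  using exp_neg_rate_le_1[of n x] by (auto simp: guarded_potential_def)

lemma potential_le_exp: "potential n x \<le> exp (- rate * G n x)"
  using rate_pos by (simp add: potential_def mult_nonneg_nonpos)

lemma borel_measurable_potential[measurable]: "potential n \<in> borel_measurable M"
  unfolding potential_def by measurable

lemma borel_measurable_guarded_potential[measurable]: "guarded_potential n \<in> borel_measurable M"
  unfolding guarded_potential_def by measurable

lemma integrable_potential: "integrable M (potential n)"
  by (rule integrable_const_bound[where B = 1]) (simp_all add: potential_bounds)

lemma integrable_guarded_potential: "integrable M (guarded_potential n)"
  by (rule integrable_const_bound[where B = 1]) (simp_all add: guarded_potential_bounds)

lemma integrable_guarded_potential_decrease: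
  assumes "n0 \<le> n"
  shows "integrable M (\<lambda>x. guarded_potential n x * decrease n x)"
proof (rule integrable_const_bound[where B = c])
  show "AE x in M. norm (guarded_potential n x * decrease n x) \<le> c"
    using bounded[OF assms]
  proof eventually_elim
    case (elim x)
    have "\<bar>guarded_potential n x\<bar> * \<bar>decrease n x\<bar> \<le> 1 * c"
      using guarded_potential_bounds[of n x] elim by (intro mult_mono) auto
    then show ?case by (simp add: abs_mult)
  qed
qed simp

lemma potential_Suc_le:
  assumes "n0 \<le> n"
  shows "AE x in M. potential (Suc n) x \<le> potential n x
      + rate * (guarded_potential n x * decrease n x) + rate\<^sup>2 * c\<^sup>2 * guarded_potential n x"
  using absorbing[of n] bounded[OF assms]
proof eventually_elim
  case (elim x)
  show ?case
  proof (cases "0 < G n x")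
    case True
    have "potential (Suc n) x \<le> exp (- rate * G (Suc n) x)"
      by (rule potential_le_exp)
    also have "\<dots> \<le> exp (- rate * G n x) * (1 + rate * decrease n x + rate\<^sup>2 * c\<^sup>2)"
      using exp_neg_mult_le_quadratic[of rate c "G n x" "G (Suc n) x"] elim(2) rate_pos rate_mult_c_le_1
      by simp
    finally show ?thesis
      using True by (simp add: potential_def guarded_potential_def algebra_simps)
  next
    case False
    then show ?thesis
      using elim(1) by (simp add: potential_def guarded_potential_def)
  qed
qed

lemma integral_guarded_potential_decrease_le:
  assumes "n0 \<le> n"
  shows "(\<integral>x. guarded_potential n x * decrease n x \<partial>M) \<le> - \<epsilon> * (\<integral>x. guarded_potential n x \<partial>M)"
proof -
  interpret finite_measure_subalgebra M "F n"
    by unfold_locales (rule subalgebra_F)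
  let ?E = "real_cond_exp M (F n) (decrease n)"
  have [measurable]: "guarded_potential n \<in> borel_measurable (F n)"
    using G_measurable[of n] unfolding guarded_potential_def by measurable
  note cond_exp = real_cond_exp_intg[OF integrable_guarded_potential_decrease[OF assms]]
  have "AE x in M. guarded_potential n x * ?E x \<le> - \<epsilon> * guarded_potential n x"
    using drift[OF assms]
  proof eventually_elim
    case (elim x)
    then show ?case
      using guarded_potential_bounds[of n x] mult_left_mono[of "?E x" "- \<epsilon>" "guarded_potential n x"]
      by (cases "0 < G n x") (auto simp: guarded_potential_def ac_simps)
  qed
  then have "(\<integral>x. guarded_potential n x * ?E x \<partial>M) \<le> (\<integral>x. - \<epsilon> * guarded_potential n x \<partial>M)"
    by (intro integral_mono_AE cond_exp(1)) (simp_all add: integrable_guarded_potential)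
  then show ?thesis
    using cond_exp(2) by simp
qed

lemma integral_potential_Suc_le:
  assumes "n0 \<le> n"
  shows "(\<integral>x. potential (Suc n) x \<partial>M) \<le> (\<integral>x. potential n x \<partial>M)"
proof -
  let ?I = "\<integral>x. guarded_potential n x \<partial>M"
  have "0 \<le> ?I"
    using guarded_potential_bounds by (intro integral_nonneg_AE) auto
  have "(\<integral>x. potential (Suc n) x \<partial>M) \<le> (\<integral>x. potential n x
      + rate * (guarded_potential n x * decrease n x) + rate\<^sup>2 * c\<^sup>2 * guarded_potential n x \<partial>M)"
    using integrable_potential integrable_guarded_potential
      integrable_guarded_potential_decrease[OF assms]
    by (intro integral_mono_AE potential_Suc_le[OF assms]) auto
  also have "\<dots> = (\<integral>x. potential n x \<partial>M) + rate * (\<integral>x. guarded_potential n x * decrease n x \<partial>M)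
      + rate\<^sup>2 * c\<^sup>2 * ?I"
    using integrable_potential integrable_guarded_potential
      integrable_guarded_potential_decrease[OF assms]
    by simp
  also have "\<dots> \<le> (\<integral>x. potential n x \<partial>M) + rate * (- \<epsilon> * ?I) + rate\<^sup>2 * c\<^sup>2 * ?I"
    using mult_left_mono[OF integral_guarded_potential_decrease_le[OF assms], of rate] rate_pos
    by simp
  also have "\<dots> = (\<integral>x. potential n x \<partial>M) + (rate * ?I) * (rate * c\<^sup>2 - \<epsilon>)"
    by (simp add: algebra_simps power2_eq_square)
  also have "\<dots> \<le> (\<integral>x. potential n x \<partial>M)"
    using mult_nonneg_nonpos[of "rate * ?I" "rate * c\<^sup>2 - \<epsilon>"] rate_mult_c_sq_le_eps rate_pos \<open>0 \<le> ?I\<close>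
    by simp
  finally show ?thesis .
qed

lemma integral_potential_le_initial:
  "n0 \<le> n \<Longrightarrow> (\<integral>x. potential n x \<partial>M) \<le> (\<integral>x. potential n0 x \<partial>M)"
proof (induction n rule: dec_induct)
  case (step n)
  then show ?case using integral_potential_Suc_le[of n] by linarith
qed simp

lemma integral_potential_less_1:
  assumes "0 < prob {x \<in> space M. 0 < G n x}"
  shows "(\<integral>x. potential n x \<partial>M) < 1"
proof (rule ccontr)
  assume "\<not> (\<integral>x. potential n x \<partial>M) < 1"
  then have "(\<integral>x. 1 - potential n x \<partial>M) \<le> 0"
    using integrable_potential[of n] by (simp add: prob_space)
  moreover have "0 \<le> (\<integral>x. 1 - potential n x \<partial>M)"
    using potential_bounds by (intro integral_nonneg_AE) auto
  moreover have "integrable M (\<lambda>x. 1 - potential n x)"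
    using integrable_potential by simp
  ultimately have "AE x in M. 1 - potential n x = 0"
    using potential_bounds integral_nonneg_eq_0_iff_AE[where f = "\<lambda>x. 1 - potential n x"] by simp
  then have "AE x in M. \<not> 0 < G n x"
    by eventually_elim (use rate_pos in \<open>auto simp: potential_def\<close>)
  then have "prob {x \<in> space M. 0 < G n x} = 0"
    by (intro prob_eq_0_AE)
  with assms show False by simp
qed

lemma AE_absorbed_before:
  "AE x in M. (\<exists>k\<le>n. G k x \<le> 0) \<longrightarrow> G n x \<le> 0"
proof -
  have "AE x in M. \<forall>k. G k x \<le> 0 \<longrightarrow> G (Suc k) x \<le> 0"
    using absorbing by (simp add: AE_all_countable)
  then show ?thesis
  proof eventually_elim
    case (elim x)
    have "G (k + d) x \<le> 0" if "G k x \<le> 0" for k d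
      using that elim by (induction d) auto
    then show ?case
      by (metis le_add_diff_inverse)
  qed
qed

lemma prob_absorbed_before_le:
  "prob {x \<in> space M. \<exists>k\<le>n. G k x \<le> 0} \<le> (\<integral>x. potential n x \<partial>M)"
proof -
  have "prob {x \<in> space M. \<exists>k\<le>n. G k x \<le> 0} \<le> prob {x \<in> space M. G n x \<le> 0}"
    using AE_absorbed_before by (intro finite_measure_mono_AE) auto
  also have "\<dots> = (\<integral>x. indicator {x \<in> space M. G n x \<le> 0} x \<partial>M)"
    by simp
  also have "\<dots> \<le> (\<integral>x. potential n x \<partial>M)"
  proof (rule integral_mono[OF _ integrable_potential])
    show "integrable M (indicat_real {x \<in> space M. G n x \<le> 0})"
      by (intro integrable_real_indicator) (simp_all add: emeasure_eq_measure)
    show "indicat_real {x \<in> space M. G n x \<le> 0} x \<le> potential n x" for x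
      using potential_bounds[of n x] by (auto simp: potential_def split: split_indicator)
  qed
  finally show ?thesis .
qed

theorem prob_absorbed_less_1:
  assumes "0 < prob {x \<in> space M. 0 < G n0 x}"
  shows "prob {x \<in> space M. \<exists>n. G n x \<le> 0} < 1"
proof -
  let ?S = "\<lambda>n. {x \<in> space M. \<exists>k\<le>n. G k x \<le> 0}"
  have "(\<lambda>n. prob (?S n)) \<longlonglongrightarrow> prob (\<Union>n. ?S n)"
    by (intro finite_Lim_measure_incseq) (auto simp: incseq_def intro: le_trans)
  moreover have "prob (?S n) \<le> (\<integral>x. potential n0 x \<partial>M)" if "n0 \<le> n" for n
    using prob_absorbed_before_le integral_potential_le_initial[OF that] by (rule order_trans)
  ultimately have "prob (\<Union>n. ?S n) \<le> (\<integral>x. potential n0 x \<partial>M)"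
    by (intro LIMSEQ_le_const2) blast+
  also have "(\<Union>n. ?S n) = {x \<in> space M. \<exists>n. G n x \<le> 0}"
    by auto
  finally show ?thesis
    using integral_potential_less_1[OF assms] by simp
qed

end

lemma continuous_on_peval:
  fixes f :: "'a::topological_space \<Rightarrow> nat \<Rightarrow> real"
  assumes "continuous_on UNIV f"
  shows "continuous_on UNIV (\<lambda>s. peval p (f s))"
  using assms
proof (induction p)
  case (MVar j) then show ?case
    by (simp add: continuous_on_product_then_coordinatewise)
qed (simp_all add: continuous_on_add continuous_on_mult)

lemma continuous_on_body_upto: "continuous_on UNIV (\<lambda>s. body_upto L j s \<kappa>)"
proof (induction j)
  case 0 show ?case by (simp add: continuous_on_id)
next
  case (Suc j)
  have coord: "continuous_on UNIV (\<lambda>s. body_upto L j s \<kappa> i)" for i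
    using continuous_on_product_then_coordinatewise[OF Suc.IH] .
  have upd: "continuous_on UNIV (\<lambda>s. peval (upd L j (\<kappa> j)) (body_upto L j s \<kappa>))"
    by (rule continuous_on_peval[OF Suc.IH])
  show ?case
    unfolding body_upto.simps Let_def
    apply (rule continuous_on_coordinatewise_then_product)
    subgoal for i
      by (cases "i = j")
        (simp_all add: coord continuous_on_add[OF continuous_on_mult[OF continuous_on_const coord] upd])
    done
qed

lemma borel_measurable_guardG[measurable]: "guardG L \<in> borel_measurable borel"
  unfolding guardG_def
  by (intro borel_measurable_continuous_onI continuous_intros
      continuous_on_peval[OF continuous_on_id, simplified])

lemma measurable_body[measurable]: "(\<lambda>s. body L s \<kappa>) \<in> measurable borel borel"
  unfolding body_def by (intro borel_measurable_continuous_onI continuous_on_body_upto)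

lemma measurable_loop_step[measurable]: "(\<lambda>s. loop_step L s \<kappa>) \<in> measurable borel borel"
  unfolding loop_step_def by measurable

lemma borel_measurable_component[measurable]:
  "(\<lambda>s::nat \<Rightarrow> real. s j) \<in> borel_measurable borel"
  by (intro borel_measurable_continuous_onI continuous_on_product_coordinates)

text \<open>The body only reads the first m choices. Truncating the choice vector to them
  makes it range over a countable set, which is what measurability of the run needs.\<close>

definition truncate_choice :: "nat \<Rightarrow> (nat \<Rightarrow> nat) \<Rightarrow> (nat \<Rightarrow> nat)" where
  "truncate_choice m \<kappa> = (\<lambda>j. if j < m then \<kappa> j else 0)"

lemma body_upto_truncate_choice:
  "j \<le> m \<Longrightarrow> body_upto L j s (truncate_choice m \<kappa>) = body_upto L j s \<kappa>"
  by (induction j) (auto simp: truncate_choice_def Let_def)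

lemma loop_step_truncate_choice: "loop_step L s (truncate_choice (nvars L) \<kappa>) = loop_step L s \<kappa>"
  by (simp add: loop_step_def body_def body_upto_truncate_choice)

lemma countable_range_truncate_choice: "countable (range (truncate_choice m))"
proof (rule countable_subset)
  let ?of_list = "\<lambda>xs j. if j < m then xs ! j else 0 :: nat"
  show "range (truncate_choice m) \<subseteq> range ?of_list"
  proof
    fix f assume "f \<in> range (truncate_choice m)"
    then obtain \<kappa> where "f = truncate_choice m \<kappa>" by auto
    then have "f = ?of_list (map \<kappa> [0..<m])" by (auto simp: truncate_choice_def)
    then show "f \<in> range ?of_list" by blast
  qed
qed simp

lemma run_snth[simp]: "run L ks !! n = run_state L ks n"
  by (simp add: run_def)

lemma measurable_run_state:
  "(\<lambda>ks. run_state L ks n) \<in> measurable (stream_space (measure_pmf P)) borel"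
proof (induction n)
  case 0 show ?case by simp
next
  case (Suc n)
  let ?m = "nvars L"
  have "(\<lambda>ks. run_state L ks (Suc n)) =
      (\<lambda>ks. loop_step L (run_state L ks n) (truncate_choice ?m (ks !! n)))"
    by (simp add: loop_step_truncate_choice)
  also have "\<dots> \<in> measurable (stream_space (measure_pmf P)) borel"
  proof (rule measurable_compose_countable'[where I = "range (truncate_choice ?m)"
        and f = "\<lambda>\<kappa> ks. loop_step L (run_state L ks n) \<kappa>" and g = "\<lambda>ks. truncate_choice ?m (ks !! n)"])
    show "(\<lambda>ks. loop_step L (run_state L ks n) \<kappa>) \<in> measurable (stream_space (measure_pmf P)) borel"
      for \<kappa>
      using measurable_compose[OF Suc.IH measurable_loop_step] by simp
    show "(\<lambda>ks. truncate_choice ?m (ks !! n))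
        \<in> measurable (stream_space (measure_pmf P)) (count_space (range (truncate_choice ?m)))"
      by (rule measurable_compose[OF measurable_snth]) simp
  qed (rule countable_range_truncate_choice)
  finally show ?case .
qed

lemma measurable_run: "run L \<in> measurable (stream_space (measure_pmf P)) (stream_space borel)"
  by (rule measurable_stream_space2) (simp add: measurable_run_state)

lemma prob_space_loop_space: "prob_space (loop_space L)"
  unfolding loop_space_def
  by (rule prob_space.prob_space_distr[OF
        prob_space.prob_space_stream_space[OF prob_space_measure_pmf] measurable_run])

lemma sets_loop_space[simp, measurable_cong]: "sets (loop_space L) = sets (stream_space borel)"
  by (simp add: loop_space_def)

lemma space_loop_space[simp]: "space (loop_space L) = UNIV"
  by (simp add: loop_space_def space_stream_space)

lemma measurable_snth_loop_space[measurable]: "(\<lambda>\<omega>. \<omega> !! k) \<in> measurable (loop_space L) borel"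
  by measurable

lemma sets_loop_filt: "sets (loop_filt L i) = sigma_sets UNIV
     {(\<lambda>\<omega>. \<omega> !! k) -` A \<inter> space (loop_space L) | k A. k \<le> i \<and> A \<in> sets borel}"
  unfolding loop_filt_def by (subst sets_measure_of) auto

lemma space_loop_filt[simp]: "space (loop_filt L i) = UNIV"
  unfolding loop_filt_def by (subst space_measure_of) auto

lemma subalgebra_loop_filt: "subalgebra (loop_space L) (loop_filt L i)"
  unfolding subalgebra_def
proof
  show "sets (loop_filt L i) \<subseteq> sets (loop_space L)"
    unfolding sets_loop_filt
  proof (rule sets.sigma_sets_subset')
    show "{(\<lambda>\<omega>. \<omega> !! k) -` A \<inter> space (loop_space L) | k A. k \<le> i \<and> A \<in> sets borel}
        \<subseteq> sets (loop_space L)"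
      using measurable_sets[OF measurable_snth_loop_space] by blast
    show "UNIV \<in> sets (loop_space L)" using sets.top[of "loop_space L"] by simp
  qed
qed simp

lemma measurable_snth_loop_filt: "k \<le> i \<Longrightarrow> (\<lambda>\<omega>. \<omega> !! k) \<in> measurable (loop_filt L i) borel"
  unfolding measurable_def sets_loop_filt by (auto intro!: sigma_sets.Basic)

lemma borel_measurable_guard_loop_filt:
  "(\<lambda>\<omega>. guardG L (\<omega> !! i)) \<in> borel_measurable (loop_filt L i)"
  using measurable_compose[OF measurable_snth_loop_filt borel_measurable_guardG] by simp

definition loop_runs :: "psloop \<Rightarrow> (nat \<Rightarrow> real) stream set" where
  "loop_runs L =
     {\<omega>. \<forall>i. \<exists>\<kappa>\<in>set_pmf (choice_pmf L). \<omega> !! Suc i = loop_step L (\<omega> !! i) \<kappa>}"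

lemma loop_runs_sets: "loop_runs L \<in> sets (stream_space borel)"
proof -
  have "loop_runs L = {\<omega> \<in> space (stream_space borel). \<forall>i. \<exists>\<kappa>\<in>set_pmf (choice_pmf L).
        \<forall>j. (\<omega> !! Suc i) j = loop_step L (\<omega> !! i) \<kappa> j}"
    by (auto simp: loop_runs_def space_stream_space fun_eq_iff)
  also have "\<dots> \<in> sets (stream_space borel)"
    by measurable
  finally show ?thesis .
qed

lemma AE_loop_runs: "AE \<omega> in loop_space L. \<omega> \<in> loop_runs L"
proof -
  have "AE ks in stream_space (measure_pmf (choice_pmf L)).
      stream_all (\<lambda>\<kappa>. \<kappa> \<in> set_pmf (choice_pmf L)) ks"
    by (rule prob_space.AE_stream_all[OF prob_space_measure_pmf]) (simp_all add: AE_measure_pmf)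
  then have "AE ks in stream_space (measure_pmf (choice_pmf L)). run L ks \<in> loop_runs L"
    by eventually_elim (auto simp: loop_runs_def stream_all_def)
  then show ?thesis
    unfolding loop_space_def using loop_runs_sets
    by (subst AE_distr_iff[OF measurable_run]) (simp_all add: space_stream_space)
qed

lemma loop_runs_stopped:
  assumes "\<omega> \<in> loop_runs L" "\<not> guardG L (\<omega> !! i) > 0"
  shows "\<omega> !! Suc i = \<omega> !! i"
proof -
  obtain \<kappa> where "\<omega> !! Suc i = loop_step L (\<omega> !! i) \<kappa>"
    using assms(1) unfolding loop_runs_def by blast
  then show ?thesis using assms(2) by (simp add: loop_step_def)
qed

lemma loop_runs_guard_history:
  assumes "\<omega> \<in> loop_runs L" "guardG L (\<omega> !! i) > 0" "k \<le> i"
  shows "guardG L (\<omega> !! k) > 0"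
proof (rule ccontr)
  assume stopped: "\<not> guardG L (\<omega> !! k) > 0"
  have "\<omega> !! (k + d) = \<omega> !! k" for d
    by (induction d) (use loop_runs_stopped[OF assms(1)] stopped in auto)
  from this[of "i - k"] stopped assms(2,3) show False by simp
qed

lemma loop_runs_body:
  assumes "\<omega> \<in> loop_runs L" "guardG L (\<omega> !! i) > 0"
  obtains \<kappa> where "\<kappa> \<in> set_pmf (choice_pmf L)" "\<omega> !! Suc i = body L (\<omega> !! i) \<kappa>"
proof -
  obtain \<kappa> where "\<kappa> \<in> set_pmf (choice_pmf L)" "\<omega> !! Suc i = loop_step L (\<omega> !! i) \<kappa>"
    using assms(1) unfolding loop_runs_def by blast
  with assms(2) that show thesis by (simp add: loop_step_def)
qed

lemma enat_less_stop_time_iff: "enat i < stop_time L \<omega> \<longleftrightarrow> (\<forall>k\<le>i. guardG L (\<omega> !! k) > 0)"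
proof (cases "\<exists>i. guardG L (\<omega> !! i) \<le> 0")
  case True
  define l where "l = (LEAST i. guardG L (\<omega> !! i) \<le> 0)"
  have "guardG L (\<omega> !! l) \<le> 0" "\<And>k. k < l \<Longrightarrow> guardG L (\<omega> !! k) > 0"
    unfolding l_def using True by (metis LeastI, metis not_less_Least not_le)
  moreover have "stop_time L \<omega> = enat l" using True by (simp add: stop_time_def l_def)
  ultimately show ?thesis by (auto simp: not_le)
next
  case False
  then have "stop_time L \<omega> = \<infinity>" by (simp add: stop_time_def)
  with False show ?thesis by (auto simp: not_le)
qed

lemma stop_time_finite_iff: "stop_time L \<omega> < \<infinity> \<longleftrightarrow> (\<exists>i. guardG L (\<omega> !! i) \<le> 0)"
  by (simp add: stop_time_def)

lemma loop_runs_enat_less_stop_time: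
  "\<omega> \<in> loop_runs L \<Longrightarrow> guardG L (\<omega> !! i) > 0 \<Longrightarrow> enat i < stop_time L \<omega>"
  using loop_runs_guard_history by (auto simp: enat_less_stop_time_iff)

lemma sets_enat_less_stop_time[measurable]:
  "{\<omega> \<in> space (loop_space L). enat i < stop_time L \<omega>} \<in> sets (loop_space L)"
  unfolding enat_less_stop_time_iff by measurable

lemma alt_prob_nonneg: "prob_solvable L \<Longrightarrow> j < nvars L \<Longrightarrow> 0 \<le> alt_prob L j k"
  unfolding prob_solvable_def alt_prob_def by auto

lemma alt_prob_sum:
  assumes ps: "prob_solvable L" and j: "j < nvars L"
  shows "(\<integral>\<^sup>+k. alt_prob L j k \<partial>count_space UNIV) = 1"
proof -
  define n where "n = nalt L j"
  have n: "1 \<le> n" using ps j unfolding prob_solvable_def n_def by auto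
  have "(\<integral>\<^sup>+k. alt_prob L j k \<partial>count_space UNIV) = (\<Sum>k<n. ennreal (alt_prob L j k))"
    using n by (intro nn_integral_count_space') (auto simp: alt_prob_def n_def)
  also have "\<dots> = ennreal (alt_prob L j (n - 1) + (\<Sum>k<n - 1. alt_prob L j k))"
  proof -
    have "{..<n} = insert (n - 1) {..<n - 1}" using n by auto
    then show ?thesis using alt_prob_nonneg[OF ps j] by (simp add: sum_ennreal)
  qed
  also have "(\<Sum>k<n - 1. alt_prob L j k) = (\<Sum>k<n - 1. pr L j k)"
    by (intro sum.cong) (auto simp: alt_prob_def n_def)
  finally show ?thesis using n by (simp add: alt_prob_def n_def)
qed

lemma set_alt_pmf:
  assumes "prob_solvable L" "j < nvars L"
  shows "set_pmf (alt_pmf L j) \<subseteq> {..<nalt L j}"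
proof -
  have "set_pmf (alt_pmf L j) = {k. alt_prob L j k \<noteq> 0}"
    unfolding alt_pmf_def by (rule set_embed_pmf[OF alt_prob_nonneg alt_prob_sum]) (use assms in auto)
  also have "\<dots> \<subseteq> {..<nalt L j}"
    using assms unfolding prob_solvable_def by (auto simp: alt_prob_def split: if_splits)
  finally show ?thesis .
qed

lemma finite_set_choice_pmf: "prob_solvable L \<Longrightarrow> finite (set_pmf (choice_pmf L))"
  unfolding choice_pmf_def set_Pi_pmf[OF finite_lessThan]
  by (intro finite_PiE_dflt) (auto intro: finite_subset[OF set_alt_pmf])

lemma branch_of_choice:
  assumes "\<kappa> \<in> set_pmf (choice_pmf L)"
  shows "(\<lambda>s. H (body L s \<kappa>)) \<in> branches L H"
proof -
  have "0 < measure_pmf.prob (choice_pmf L) {\<kappa>}"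
    using assms by (simp add: measure_pmf_single pmf_positive)
  also have "\<dots> \<le> measure_pmf.prob (choice_pmf L)
      {\<kappa>'. (\<lambda>s. H (body L s \<kappa>')) = (\<lambda>s. H (body L s \<kappa>))}"
    by (rule measure_pmf.finite_measure_mono) simp_all
  finally show ?thesis unfolding branches_def by simp
qed

lemma AE_of_cond_prob_eq_1:
  assumes "prob_space M" "A \<in> sets M" "B \<in> sets M" "cond_prob M A B = 1"
  shows "AE x in M. x \<in> B \<longrightarrow> x \<in> A"
proof -
  interpret prob_space M by fact
  have "measure M (A \<inter> B) = measure M B"
    using assms(4) by (auto simp: cond_prob_def split: if_splits)
  then have "measure M (B - A) = 0"
    using finite_measure_Diff'[OF assms(3,2)] by (simp add: Int_commute)
  then have "B - A \<in> null_sets M"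
    using assms(2,3) by (auto simp: emeasure_eq_measure)
  from AE_not_in[OF this] show ?thesis by eventually_elim auto
qed

lemma upper_bf_AE_guard:
  assumes "upper_bf L X u" and [measurable]: "\<And>i. X i \<in> borel_measurable (loop_space L)"
  shows "\<exists>\<alpha>>0. \<exists>n. \<forall>i\<ge>n. AE \<omega> in loop_space L. guardG L (\<omega> !! i) > 0 \<longrightarrow> X i \<omega> \<le> \<alpha> * u i"
proof -
  obtain \<alpha> n where "\<alpha> > 0" and bound: "\<And>i. n \<le> i \<Longrightarrow> cond_prob (loop_space L)
      {\<omega> \<in> space (loop_space L). X i \<omega> \<le> \<alpha> * u i}
      {\<omega> \<in> space (loop_space L). enat i < stop_time L \<omega>} = 1"
    using assms(1) unfolding upper_bf_def by blast
  have "AE \<omega> in loop_space L. guardG L (\<omega> !! i) > 0 \<longrightarrow> X i \<omega> \<le> \<alpha> * u i" if "n \<le> i" for i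
  proof -
    have "{\<omega> \<in> space (loop_space L). X i \<omega> \<le> \<alpha> * u i} \<in> sets (loop_space L)"
      by measurable
    from AE_of_cond_prob_eq_1[OF prob_space_loop_space this sets_enat_less_stop_time bound[OF that]] AE_loop_runs
    show ?thesis by eventually_elim (auto dest: loop_runs_enat_less_stop_time)
  qed
  with \<open>\<alpha> > 0\<close> show ?thesis by blast
qed

lemma AE_loop_space_guard_absorbing:
  "AE \<omega> in loop_space L. guardG L (\<omega> !! n) \<le> 0 \<longrightarrow> guardG L (\<omega> !! Suc n) \<le> 0"
  using AE_loop_runs by eventually_elim (metis loop_runs_stopped not_less)

lemma loop_drift:
  assumes ub: "upper_bf L (\<lambda>i. real_cond_exp (loop_space L) (loop_filt L i)
                 (\<lambda>\<omega>. - guardG L (\<omega> !! Suc i) + guardG L (\<omega> !! i))) u"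
    and "0 < \<kappa>" and ub_neg: "\<forall>i\<ge>i1. u i \<le> - \<kappa>"
  obtains \<epsilon> n where "0 < \<epsilon>"
    "\<And>i. n \<le> i \<Longrightarrow> AE \<omega> in loop_space L. guardG L (\<omega> !! i) > 0 \<longrightarrow>
        real_cond_exp (loop_space L) (loop_filt L i)
          (\<lambda>\<omega>. - guardG L (\<omega> !! Suc i) + guardG L (\<omega> !! i)) \<omega> \<le> - \<epsilon>"
proof -
  obtain \<alpha> n where "0 < \<alpha>" and bound: "\<forall>i\<ge>n. AE \<omega> in loop_space L. guardG L (\<omega> !! i) > 0 \<longrightarrow>
      real_cond_exp (loop_space L) (loop_filt L i)
        (\<lambda>\<omega>. - guardG L (\<omega> !! Suc i) + guardG L (\<omega> !! i)) \<omega> \<le> \<alpha> * u i"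
    using upper_bf_AE_guard[OF ub borel_measurable_cond_exp2] by blast
  show thesis
  proof (rule that)
    show "0 < \<alpha> * \<kappa>" using \<open>0 < \<alpha>\<close> \<open>0 < \<kappa>\<close> by simp
    fix i assume "max n i1 \<le> i"
    then have le: "\<alpha> * u i \<le> - (\<alpha> * \<kappa>)"
      using ub_neg mult_left_mono[of "u i" "- \<kappa>" \<alpha>] \<open>0 < \<alpha>\<close> by simp
    from bound \<open>max n i1 \<le> i\<close> have "AE \<omega> in loop_space L. guardG L (\<omega> !! i) > 0 \<longrightarrow>
        real_cond_exp (loop_space L) (loop_filt L i)
          (\<lambda>\<omega>. - guardG L (\<omega> !! Suc i) + guardG L (\<omega> !! i)) \<omega> \<le> \<alpha> * u i"
      by simp
    then show "AE \<omega> in loop_space L. guardG L (\<omega> !! i) > 0 \<longrightarrow>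
        real_cond_exp (loop_space L) (loop_filt L i)
          (\<lambda>\<omega>. - guardG L (\<omega> !! Suc i) + guardG L (\<omega> !! i)) \<omega> \<le> - (\<alpha> * \<kappa>)"
      by eventually_elim (use le in auto)
  qed
qed

lemma branch_bounds_AE:
  fixes c :: "((nat \<Rightarrow> real) \<Rightarrow> real) \<Rightarrow> nat \<Rightarrow> real"
  assumes cb: "\<forall>B \<in> branches L (\<lambda>s. - guardG L s).
               abs_bf L (\<lambda>i \<omega>. B (\<omega> !! i) + guardG L (\<omega> !! i)) (c B)"
  obtains \<alpha> n where "\<forall>\<kappa>\<in>set_pmf (choice_pmf L). 0 < \<alpha> \<kappa> \<and> (\<forall>i\<ge>n \<kappa>.
      AE \<omega> in loop_space L. guardG L (\<omega> !! i) > 0 \<longrightarrow>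
        \<bar>- guardG L (body L (\<omega> !! i) \<kappa>) + guardG L (\<omega> !! i)\<bar>
          \<le> \<alpha> \<kappa> * c (\<lambda>s. - guardG L (body L s \<kappa>)) i)"
proof -
  have "\<exists>\<alpha>>0. \<exists>n. \<forall>i\<ge>n. AE \<omega> in loop_space L. guardG L (\<omega> !! i) > 0 \<longrightarrow>
      \<bar>- guardG L (body L (\<omega> !! i) \<kappa>) + guardG L (\<omega> !! i)\<bar>
        \<le> \<alpha> * c (\<lambda>s. - guardG L (body L s \<kappa>)) i"
    if "\<kappa> \<in> set_pmf (choice_pmf L)" for \<kappa>
    using cb branch_of_choice[OF that, of "\<lambda>s. - guardG L s"]
    by (intro upper_bf_AE_guard) (auto simp: abs_bf_def)
  then have "\<forall>\<kappa>\<in>set_pmf (choice_pmf L). \<exists>p. 0 < fst p \<and> (\<forall>i\<ge>snd p.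
      AE \<omega> in loop_space L. guardG L (\<omega> !! i) > 0 \<longrightarrow>
        \<bar>- guardG L (body L (\<omega> !! i) \<kappa>) + guardG L (\<omega> !! i)\<bar>
          \<le> fst p * c (\<lambda>s. - guardG L (body L s \<kappa>)) i)"
    by fastforce
  from bchoice[OF this] obtain p where "\<forall>\<kappa>\<in>set_pmf (choice_pmf L). 0 < fst (p \<kappa>) \<and>
      (\<forall>i\<ge>snd (p \<kappa>). AE \<omega> in loop_space L. guardG L (\<omega> !! i) > 0 \<longrightarrow>
        \<bar>- guardG L (body L (\<omega> !! i) \<kappa>) + guardG L (\<omega> !! i)\<bar>
          \<le> fst (p \<kappa>) * c (\<lambda>s. - guardG L (body L s \<kappa>)) i)"
    by blast
  then show thesis
    by (rule that[of "fst \<circ> p" "snd \<circ> p", unfolded comp_def])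
qed

text \<open>Finitely many choice vectors, hence finitely many branches: the sums of their
  constants give a uniform bound.\<close>

lemma AE_increment_bound_all_choices:
  fixes c :: "((nat \<Rightarrow> real) \<Rightarrow> real) \<Rightarrow> nat \<Rightarrow> real"
  assumes ps: "prob_solvable L"
    and cb: "\<forall>B \<in> branches L (\<lambda>s. - guardG L s).
               abs_bf L (\<lambda>i \<omega>. B (\<omega> !! i) + guardG L (\<omega> !! i)) (c B)"
    and cbC: "\<forall>B \<in> branches L (\<lambda>s. - guardG L s). \<forall>i\<ge>i2. c B i \<le> C"
  obtains d n where "0 < d"
    "\<And>i. n \<le> i \<Longrightarrow> AE \<omega> in loop_space L. \<forall>\<kappa>\<in>set_pmf (choice_pmf L). guardG L (\<omega> !! i) > 0 \<longrightarrow>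
        \<bar>- guardG L (body L (\<omega> !! i) \<kappa>) + guardG L (\<omega> !! i)\<bar> < d"
proof -
  define K where "K = set_pmf (choice_pmf L)"
  have "finite K" using finite_set_choice_pmf[OF ps] by (simp add: K_def)
  obtain \<alpha> n where \<alpha>n: "\<forall>\<kappa>\<in>K. 0 < \<alpha> \<kappa> \<and> (\<forall>i\<ge>n \<kappa>.
      AE \<omega> in loop_space L. guardG L (\<omega> !! i) > 0 \<longrightarrow>
        \<bar>- guardG L (body L (\<omega> !! i) \<kappa>) + guardG L (\<omega> !! i)\<bar>
          \<le> \<alpha> \<kappa> * c (\<lambda>s. - guardG L (body L s \<kappa>)) i)"
    using branch_bounds_AE[OF cb] unfolding K_def by blast
  define d where "d = (\<Sum>\<kappa>\<in>K. \<alpha> \<kappa>) * \<bar>C\<bar> + 1"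
  have "0 < d"
    unfolding d_def using \<alpha>n by (intro add_nonneg_pos mult_nonneg_nonneg sum_nonneg) auto
  show thesis
  proof (rule that[OF \<open>0 < d\<close>])
    fix i assume i: "max i2 (\<Sum>\<kappa>\<in>K. n \<kappa>) \<le> i"
    show "AE \<omega> in loop_space L. \<forall>\<kappa>\<in>set_pmf (choice_pmf L). guardG L (\<omega> !! i) > 0 \<longrightarrow>
        \<bar>- guardG L (body L (\<omega> !! i) \<kappa>) + guardG L (\<omega> !! i)\<bar> < d"
      unfolding K_def[symmetric]
    proof (rule AE_finite_allI[OF \<open>finite K\<close>])
      fix \<kappa> assume "\<kappa> \<in> K"
      have "c (\<lambda>s. - guardG L (body L s \<kappa>)) i \<le> C"
        using cbC branch_of_choice[of \<kappa> L "\<lambda>s. - guardG L s"] \<open>\<kappa> \<in> K\<close> i by (simp add: K_def)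
      then have "\<alpha> \<kappa> * c (\<lambda>s. - guardG L (body L s \<kappa>)) i \<le> \<alpha> \<kappa> * \<bar>C\<bar>"
        using \<alpha>n \<open>\<kappa> \<in> K\<close> by (intro mult_left_mono) auto
      also have "\<dots> \<le> (\<Sum>\<kappa>\<in>K. \<alpha> \<kappa>) * \<bar>C\<bar>"
        using \<alpha>n \<open>\<kappa> \<in> K\<close> \<open>finite K\<close> by (intro mult_right_mono member_le_sum) auto
      finally have less: "\<alpha> \<kappa> * c (\<lambda>s. - guardG L (body L s \<kappa>)) i < d"
        by (simp add: d_def)
      have "n \<kappa> \<le> i"
        using member_le_sum[of \<kappa> K n] \<open>\<kappa> \<in> K\<close> \<open>finite K\<close> i by simp
      with \<alpha>n \<open>\<kappa> \<in> K\<close> have "AE \<omega> in loop_space L. guardG L (\<omega> !! i) > 0 \<longrightarrow>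
          \<bar>- guardG L (body L (\<omega> !! i) \<kappa>) + guardG L (\<omega> !! i)\<bar>
            \<le> \<alpha> \<kappa> * c (\<lambda>s. - guardG L (body L s \<kappa>)) i"
        by blast
      then show "AE \<omega> in loop_space L. guardG L (\<omega> !! i) > 0 \<longrightarrow>
          \<bar>- guardG L (body L (\<omega> !! i) \<kappa>) + guardG L (\<omega> !! i)\<bar> < d"
        by eventually_elim (use less in auto)
    qed
  qed
qed

lemma loop_bounded_increments:
  fixes c :: "((nat \<Rightarrow> real) \<Rightarrow> real) \<Rightarrow> nat \<Rightarrow> real"
  assumes "prob_solvable L"
    and "\<forall>B \<in> branches L (\<lambda>s. - guardG L s).
               abs_bf L (\<lambda>i \<omega>. B (\<omega> !! i) + guardG L (\<omega> !! i)) (c B)"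
    and "\<forall>B \<in> branches L (\<lambda>s. - guardG L s). \<forall>i\<ge>i2. c B i \<le> C"
  obtains d n where "0 < d"
    "\<And>i. n \<le> i \<Longrightarrow> AE \<omega> in loop_space L. \<bar>- guardG L (\<omega> !! Suc i) + guardG L (\<omega> !! i)\<bar> < d"
proof -
  obtain d n where "0 < d" and bound: "\<And>i. n \<le> i \<Longrightarrow> AE \<omega> in loop_space L.
      \<forall>\<kappa>\<in>set_pmf (choice_pmf L). guardG L (\<omega> !! i) > 0 \<longrightarrow>
        \<bar>- guardG L (body L (\<omega> !! i) \<kappa>) + guardG L (\<omega> !! i)\<bar> < d"
    using AE_increment_bound_all_choices[OF assms] by blast
  have "AE \<omega> in loop_space L. \<bar>- guardG L (\<omega> !! Suc i) + guardG L (\<omega> !! i)\<bar> < d" if "n \<le> i" for i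
    using AE_loop_runs bound[OF that]
  proof eventually_elim
    case (elim \<omega>)
    show ?case
    proof (cases "0 < guardG L (\<omega> !! i)")
      case True
      with elim show ?thesis
        by (metis loop_runs_body)
    next
      case False
      then show ?thesis
        using loop_runs_stopped[OF elim(1)] \<open>0 < d\<close> by simp
    qed
  qed
  with \<open>0 < d\<close> show thesis by (rule that)
qed

theorem mainTheorem6:
  fixes L :: psloop and u :: "nat \<Rightarrow> real"
    and c :: "((nat \<Rightarrow> real) \<Rightarrow> real) \<Rightarrow> nat \<Rightarrow> real"
    and \<kappa> C :: real and i1 i2 :: nat
  assumes ps: "prob_solvable L"
    and ub: "upper_bf L
              (\<lambda>i. real_cond_exp (loop_space L) (loop_filt L i)
                     (\<lambda>\<omega>. - guardG L (\<omega> !! Suc i) + guardG L (\<omega> !! i))) u"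
    and \<kappa>pos: "\<kappa> > 0" and ubneg: "\<forall>i\<ge>i1. u i \<le> - \<kappa>"
    and guardpos: "\<forall>i. measure (loop_space L)
                      {\<omega> \<in> space (loop_space L). guardG L (\<omega> !! i) > 0} > 0"
    and cb: "\<forall>B \<in> branches L (\<lambda>s. - guardG L s).
               abs_bf L (\<lambda>i \<omega>. B (\<omega> !! i) + guardG L (\<omega> !! i)) (c B)"
    and cbC: "\<forall>B \<in> branches L (\<lambda>s. - guardG L s). \<forall>i\<ge>i2. c B i \<le> C"
  shows "(\<exists>i0 \<epsilon> cc. \<epsilon> > 0 \<and> cc > 0 \<and>
            measure (loop_space L)
              {\<omega> \<in> space (loop_space L). - guardG L (\<omega> !! i0) < 0} > 0 \<and>
            (\<forall>i\<ge>i0. AE \<omega> in loop_space L.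
               (\<not> guardG L (\<omega> !! i) > 0 \<longrightarrow> - guardG L (\<omega> !! i) \<ge> 0) \<and>
               (guardG L (\<omega> !! i) > 0 \<longrightarrow>
                  real_cond_exp (loop_space L) (loop_filt L i)
                    (\<lambda>\<omega>'. (- guardG L (\<omega>' !! Suc i)) - (- guardG L (\<omega>' !! i))) \<omega> \<le> - \<epsilon>) \<and>
               \<bar>(- guardG L (\<omega> !! Suc i)) - (- guardG L (\<omega> !! i))\<bar> < cc))
         \<and> \<not> is_AST L"
proof -
  obtain \<epsilon> n1 where "0 < \<epsilon>" and drift: "\<And>i. n1 \<le> i \<Longrightarrow> AE \<omega> in loop_space L.
      guardG L (\<omega> !! i) > 0 \<longrightarrow> real_cond_exp (loop_space L) (loop_filt L i)
        (\<lambda>\<omega>. - guardG L (\<omega> !! Suc i) + guardG L (\<omega> !! i)) \<omega> \<le> - \<epsilon>"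
    using loop_drift[OF ub \<kappa>pos ubneg] by blast
  obtain d n2 where "0 < d" and bounded: "\<And>i. n2 \<le> i \<Longrightarrow>
      AE \<omega> in loop_space L. \<bar>- guardG L (\<omega> !! Suc i) + guardG L (\<omega> !! i)\<bar> < d"
    using loop_bounded_increments[OF ps cb cbC] by blast
  define i0 where "i0 = max n1 n2"
  interpret repulsing_process "loop_space L" "loop_filt L" "\<lambda>i \<omega>. guardG L (\<omega> !! i)" i0 \<epsilon> d
    by (intro repulsing_process.intro repulsing_process_axioms.intro prob_space_loop_space
        subalgebra_loop_filt borel_measurable_guard_loop_filt AE_loop_space_guard_absorbing
        \<open>0 < \<epsilon>\<close> \<open>0 < d\<close> drift bounded) (simp_all add: i0_def)
  have "\<not> is_AST L"
    unfolding is_AST_def stop_time_finite_iff using prob_absorbed_less_1 guardpos by simp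
  moreover have "AE \<omega> in loop_space L.
      (\<not> guardG L (\<omega> !! i) > 0 \<longrightarrow> - guardG L (\<omega> !! i) \<ge> 0) \<and>
      (guardG L (\<omega> !! i) > 0 \<longrightarrow> real_cond_exp (loop_space L) (loop_filt L i)
          (\<lambda>\<omega>'. (- guardG L (\<omega>' !! Suc i)) - (- guardG L (\<omega>' !! i))) \<omega> \<le> - \<epsilon>) \<and>
      \<bar>(- guardG L (\<omega> !! Suc i)) - (- guardG L (\<omega> !! i))\<bar> < d" if "i0 \<le> i" for i
    using drift[OF that] bounded[OF that] by eventually_elim auto
  moreover have "measure (loop_space L) {\<omega> \<in> space (loop_space L). - guardG L (\<omega> !! i0) < 0} > 0"
    using guardpos by simp
  ultimately show ?thesis
    using \<open>0 < \<epsilon>\<close> \<open>0 < d\<close> by blast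
qed

end
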